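(* Let $\delta>0$ and let $K$ be any link contained in the closed ball $B(\delta)$ of radius $\delta$ about the origin in $\mathbb{R}^3$. Then $\Lambda_K\subset\{(q,p,z)\in T^*S\times\mathbb{R}: |p|\le\delta\}$, and every Reeb chord $c$ of $\Lambda_K$ satisfies $\int_c(dz-p\,dq)\le 2\rho_0\delta$, where $\rho_0=\max\{|y|: y\in S\}$.
   Context: $S\subset\mathbb{R}^3$ is the smooth boundary of a compact convex set containing the origin in its interior, symmetric under reflection in the $y_1y_2$-plane and rotations about the $y_3$-axis; $\nu(y)$ is its outward unit normal. $S^*\mathbb{R}^3=\mathbb{R}^3\times S$ with contact form $y\cdot dx$ is identified with $J^1(S)=T^*S\times\mathbb{R}$ (contact form $dz-p\,dq$, $p\in T_qS\subset\mathbb{R}^3$ via the Euclidean metric) by $(x,y)\mapsto(y,x-(x\cdot\nu(y))\nu(y),x\cdot y)$. The conormal lift of $K$ is $\Lambda_K=\{(x,y)\in S^*\mathbb{R}^3: x\in K,\ y\cdot v=0\ \forall v\in T_xK\}$, viewed in $J^1(S)$. A Reeb chord is a segment of a flow line of the Reeb field of $dz-p\,dq$ (i.e. $\partial_z$) with both endpoints on $\Lambda_K$. $|p|$ is the Euclidean length. *)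

theory Defs
  imports "HOL-Analysis.Analysis"
begin

fun Ck_fun :: "nat \<Rightarrow> ('a::euclidean_space \<Rightarrow> real) \<Rightarrow> bool" where
  "Ck_fun 0 f \<longleftrightarrow> continuous_on UNIV f"
| "Ck_fun (Suc k) f \<longleftrightarrow> continuous_on UNIV f \<and>
     (\<forall>i\<in>Basis. \<exists>g. (\<forall>x. ((\<lambda>t. f (x + t *\<^sub>R i)) has_real_derivative g x) (at 0)) \<and> Ck_fun k g)"

definition smooth_fun :: "('a::euclidean_space \<Rightarrow> real) \<Rightarrow> bool" where
  "smooth_fun f \<longleftrightarrow> (\<forall>k. Ck_fun k f)"

definition smooth_curve :: "(real \<Rightarrow> real^3) \<Rightarrow> bool" where
  "smooth_curve \<gamma> \<longleftrightarrow> (\<forall>i. smooth_fun (\<lambda>t. \<gamma> t $ i))"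

text \<open>A link with n components, given by smooth embeddings of the circle
  R/Z (1-periodic, injective on [0,1), immersed), with pairwise disjoint images.\<close>
definition is_link_param :: "nat \<Rightarrow> (nat \<Rightarrow> real \<Rightarrow> real^3) \<Rightarrow> bool" where
  "is_link_param n \<gamma> \<longleftrightarrow> n \<ge> 1 \<and>
     (\<forall>i<n. smooth_curve (\<gamma> i) \<and> (\<forall>t. \<gamma> i (t + 1) = \<gamma> i t) \<and>
            inj_on (\<gamma> i) {0..<1} \<and> (\<forall>t. vector_derivative (\<gamma> i) (at t) \<noteq> 0)) \<and>
     (\<forall>i<n. \<forall>j<n. i \<noteq> j \<longrightarrow> \<gamma> i ` UNIV \<inter> \<gamma> j ` UNIV = {})"

definition link_set :: "nat \<Rightarrow> (nat \<Rightarrow> real \<Rightarrow> real^3) \<Rightarrow> (real^3) set" where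
  "link_set n \<gamma> = (\<Union>i<n. \<gamma> i ` UNIV)"

definition link_tangent :: "nat \<Rightarrow> (nat \<Rightarrow> real \<Rightarrow> real^3) \<Rightarrow> real^3 \<Rightarrow> (real^3) set" where
  "link_tangent n \<gamma> x = {v. \<exists>i<n. \<exists>t. \<gamma> i t = x \<and> v \<in> span {vector_derivative (\<gamma> i) (at t)}}"

text \<open>The identification S^*R^3 = R^3 x S with J^1(S), points (q,p,z).\<close>
definition jet_map :: "(real^3 \<Rightarrow> real^3) \<Rightarrow> (real^3) \<times> (real^3) \<Rightarrow> (real^3) \<times> (real^3) \<times> real" where
  "jet_map \<nu> xy = (case xy of (x, y) \<Rightarrow> (y, x - (x \<bullet> \<nu> y) *\<^sub>R \<nu> y, x \<bullet> y))"

definition conormal_lift ::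
  "(real^3) set \<Rightarrow> (real^3 \<Rightarrow> real^3) \<Rightarrow> nat \<Rightarrow> (nat \<Rightarrow> real \<Rightarrow> real^3) \<Rightarrow> ((real^3) \<times> (real^3) \<times> real) set" where
  "conormal_lift S \<nu> n \<gamma> = jet_map \<nu> `
     {(x, y). x \<in> link_set n \<gamma> \<and> y \<in> S \<and> (\<forall>v\<in>link_tangent n \<gamma> x. y \<bullet> v = 0)}"

text \<open>Reeb chord: a segment [a,b] (a<b) of a flow line t \<mapsto> (q,p,t) of the Reeb
  field d/dz with both endpoints on Lambda.\<close>
definition reeb_chord :: "((real^3) \<times> (real^3) \<times> real) set \<Rightarrow> (real \<Rightarrow> (real^3) \<times> (real^3) \<times> real) \<Rightarrow> real \<Rightarrow> real \<Rightarrow> bool" where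
  "reeb_chord \<Lambda> c a b \<longleftrightarrow> a < b \<and> (\<exists>q p. \<forall>t. c t = (q, p, t)) \<and> c a \<in> \<Lambda> \<and> c b \<in> \<Lambda>"

definition contact_integral :: "(real \<Rightarrow> (real^3) \<times> (real^3) \<times> real) \<Rightarrow> real \<Rightarrow> real \<Rightarrow> real" where
  "contact_integral c a b = integral {a..b}
     (\<lambda>t. vector_derivative (\<lambda>s. snd (snd (c s))) (at t)
          - fst (snd (c t)) \<bullet> vector_derivative (\<lambda>s. fst (c s)) (at t))"

definition refl12 :: "real^3 \<Rightarrow> real^3" where
  "refl12 y = vector [y$1, y$2, - y$3]"

definition rot3 :: "real \<Rightarrow> real^3 \<Rightarrow> real^3" where
  "rot3 \<theta> y = vector [cos \<theta> * y$1 - sin \<theta> * y$2, sin \<theta> * y$1 + cos \<theta> * y$2, y$3]"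

end

theory Submission
  imports Defs
begin

text \<open>A point of \<open>\<Lambda>\<^sub>K\<close> comes from some \<open>x \<in> K\<close> and \<open>q \<in> S\<close> with \<open>p\<close> the tangential part of
  \<open>x\<close> at \<open>q\<close> and \<open>z = x \<bullet> q\<close>; projecting onto a tangent plane does not increase length, and
  along a Reeb chord the \<open>p\<close>-component is constant, so the action is the difference of
  the two \<open>z\<close>-values, each bounded by Cauchy--Schwarz by \<open>\<rho>\<^sub>0 \<delta>\<close>.\<close>

lemma norm_minus_projection_le:
  fixes x u :: "'a::real_inner"
  assumes "norm u = 1"
  shows "norm (x - (x \<bullet> u) *\<^sub>R u) \<le> norm x"
proof -
  have "u \<bullet> u = 1" using assms by (simp add: dot_square_norm)
  then have "(norm (x - (x \<bullet> u) *\<^sub>R u))\<^sup>2 = (norm x)\<^sup>2 - (x \<bullet> u)\<^sup>2"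
    unfolding power2_norm_eq_inner
    by (simp add: inner_diff_left inner_diff_right inner_commute power2_eq_square)
  then have "(norm (x - (x \<bullet> u) *\<^sub>R u))\<^sup>2 \<le> (norm x)\<^sup>2"
    by simp
  then show ?thesis
    by (rule power2_le_imp_le) simp
qed

lemma conormal_liftE:
  assumes "(q, p, z) \<in> conormal_lift S \<nu> n \<gamma>"
  obtains x where "x \<in> link_set n \<gamma>" "q \<in> S"
    "p = x - (x \<bullet> \<nu> q) *\<^sub>R \<nu> q" "z = x \<bullet> q"
  using assms unfolding conormal_lift_def jet_map_def by auto

lemma conormal_lift_norm_le:
  assumes "\<forall>y\<in>S. norm (\<nu> y) = 1" and "link_set n \<gamma> \<subseteq> cball 0 \<delta>"
    and "(q, p, z) \<in> conormal_lift S \<nu> n \<gamma>"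
  shows "norm p \<le> \<delta>"
proof -
  obtain x where "x \<in> link_set n \<gamma>" "q \<in> S" "p = x - (x \<bullet> \<nu> q) *\<^sub>R \<nu> q"
    using assms(3) by (rule conormal_liftE)
  moreover from this have "norm x \<le> \<delta>"
    using assms(2) by auto
  ultimately show ?thesis
    using assms(1) norm_minus_projection_le[of "\<nu> q" x] by auto
qed

lemma contact_integral_reeb_chord:
  assumes "reeb_chord \<Lambda> c a b"
  shows "contact_integral c a b = b - a"
proof -
  obtain q p where "\<And>t. c t = (q, p, t)" and "a < b"
    using assms unfolding reeb_chord_def by auto
  then show ?thesis by (simp add: contact_integral_def content_real)
qed

lemma abs_inner_le_Sup_norm:
  fixes S :: "'a::real_inner set"
  assumes "bounded S" and "q \<in> S" and "norm x \<le> \<delta>"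
  shows "\<bar>x \<bullet> q\<bar> \<le> Sup (norm ` S) * \<delta>"
proof -
  have "norm q \<le> Sup (norm ` S)"
    using assms(1,2) by (intro cSup_upper) (auto simp: bounded_iff bdd_above_def)
  then have "norm x * norm q \<le> \<delta> * Sup (norm ` S)"
    using assms(3) norm_ge_zero[of q] norm_ge_zero[of x] by (intro mult_mono) linarith+
  then show ?thesis using Cauchy_Schwarz_ineq2[of x q] by (simp add: mult.commute)
qed

lemma reeb_chord_action_le:
  assumes "bounded S" and "link_set n \<gamma> \<subseteq> cball 0 \<delta>"
    and "reeb_chord (conormal_lift S \<nu> n \<gamma>) c a b"
  shows "contact_integral c a b \<le> 2 * Sup (norm ` S) * \<delta>"
proof -
  obtain q p where a: "(q, p, a) \<in> conormal_lift S \<nu> n \<gamma>"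
    and b: "(q, p, b) \<in> conormal_lift S \<nu> n \<gamma>"
    using assms(3) unfolding reeb_chord_def by auto
  obtain x where "x \<in> link_set n \<gamma>" "q \<in> S" "a = x \<bullet> q"
    using a by (rule conormal_liftE)
  with assms(1,2) have "\<bar>a\<bar> \<le> Sup (norm ` S) * \<delta>"
    using abs_inner_le_Sup_norm by fastforce
  obtain x' where "x' \<in> link_set n \<gamma>" "b = x' \<bullet> q"
    using b by (rule conormal_liftE)
  with assms(1,2) \<open>q \<in> S\<close> have "\<bar>b\<bar> \<le> Sup (norm ` S) * \<delta>"
    using abs_inner_le_Sup_norm by fastforce
  with \<open>\<bar>a\<bar> \<le> Sup (norm ` S) * \<delta>\<close> show ?thesis
    using contact_integral_reeb_chord[OF assms(3)] by linarith
qed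

theorem lemma3p3:
  fixes C S :: "(real^3) set" and g :: "real^3 \<Rightarrow> real" and \<nu> :: "real^3 \<Rightarrow> real^3"
    and n :: nat and \<gamma> :: "nat \<Rightarrow> real \<Rightarrow> real^3" and \<delta> :: real
  assumes C_compact: "compact C" and C_convex: "convex C" and C_0: "0 \<in> interior C"
    and S_def: "S = frontier C"
    and g_smooth: "smooth_fun g" and C_g: "C = {x. g x \<le> 0}"
    and \<nu>_unit: "\<forall>y\<in>S. norm (\<nu> y) = 1"
    and \<nu>_grad: "\<forall>y\<in>S. \<exists>c>0. (g has_derivative (\<lambda>h. (c *\<^sub>R \<nu> y) \<bullet> h)) (at y)"
    and sym_refl: "\<forall>x. x \<in> C \<longleftrightarrow> refl12 x \<in> C"
    and sym_rot: "\<forall>\<theta> x. x \<in> C \<longleftrightarrow> rot3 \<theta> x \<in> C"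
    and \<delta>_pos: "\<delta> > 0"
    and link: "is_link_param n \<gamma>"
    and K_ball: "link_set n \<gamma> \<subseteq> cball 0 \<delta>"
  shows "(\<forall>(q, p, z) \<in> conormal_lift S \<nu> n \<gamma>. norm p \<le> \<delta>) \<and>
         (\<forall>c a b. reeb_chord (conormal_lift S \<nu> n \<gamma>) c a b \<longrightarrow>
            contact_integral c a b \<le> 2 * Sup (norm ` S) * \<delta>)"
proof -
  have "bounded S"
    using S_def C_compact by (simp add: compact_imp_bounded compact_frontier)
  then show ?thesis
    using conormal_lift_norm_le[OF \<nu>_unit K_ball] reeb_chord_action_le[OF _ K_ball]
    by auto
qed

end
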